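(* Let $X$ be a vector space over a field $\mathbb{k}$ and let $T:X\to X$ be a $\mathbb{k}$-linear map. Then $T$ has no non-trivial finite dimensional invariant subspaces if and only if there exist a set $A$, a subspace $Y$ of $\mathcal{R}^{(A)}$ invariant under $M^{(A)}$, and a linear bijection $J:X\to Y$ such that $JTx=M^{(A)}Jx$ for all $x\in X$ (i.e. $T$ is similar to the restriction of $M^{(A)}$ to an invariant subspace).
   Context: $\mathcal{R}=\mathbb{k}(t)$ is the field of rational functions in one variable over $\mathbb{k}$, and $M:\mathcal{R}\to\mathcal{R}$ is the $\mathbb{k}$-linear map $Mf(z)=zf(z)$. For a set $A$, $\mathcal{R}^{(A)}=\{f\in\mathcal{R}^A:\{\alpha\in A:f_\alpha\neq0\}\text{ is finite}\}$ is the algebraic direct sum of copies of $\mathcal{R}$ indexed by $A$, and $M^{(A)}:\mathcal{R}^{(A)}\to\mathcal{R}^{(A)}$ is defined by $(M^{(A)}f)_\alpha=Mf_\alpha$ for each $\alpha\in A$. A non-trivial subspace means a subspace different from $\{0\}$; a subspace $L$ is invariant for $T$ if $T(L)\subseteq L$. *)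

theory Defs
  imports Main "HOL-Library.Function_Algebras" "HOL-Computational_Algebra.Fraction_Field"
    "HOL-Computational_Algebra.Polynomial"
begin

type_synonym 'k ratfun = "'k poly fract"

definition rscale :: "'k::field \<Rightarrow> 'k ratfun \<Rightarrow> 'k ratfun" where
  "rscale c f = Fraction_Field.Fract [:c:] 1 * f"

definition Mop :: "'k::field ratfun \<Rightarrow> 'k ratfun" where
  "Mop f = Fraction_Field.Fract [:0, 1:] 1 * f"

definition sumscale :: "'k::field \<Rightarrow> ('a \<Rightarrow> 'k ratfun) \<Rightarrow> ('a \<Rightarrow> 'k ratfun)" where
  "sumscale c f = (\<lambda>\<alpha>. rscale c (f \<alpha>))"

text \<open>The algebraic direct sum R^(A): finitely supported families indexed by A
  (represented as functions vanishing outside A).\<close>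
definition dsum :: "'a set \<Rightarrow> ('a \<Rightarrow> 'k::field ratfun) set" where
  "dsum A = {f. finite {\<alpha>. f \<alpha> \<noteq> 0} \<and> (\<forall>\<alpha>. \<alpha> \<notin> A \<longrightarrow> f \<alpha> = 0)}"

definition MA :: "('a \<Rightarrow> 'k::field ratfun) \<Rightarrow> ('a \<Rightarrow> 'k ratfun)" where
  "MA f = (\<lambda>\<alpha>. Mop (f \<alpha>))"

definition no_fd_invariant :: "('k::field \<Rightarrow> 'x::ab_group_add \<Rightarrow> 'x) \<Rightarrow> ('x \<Rightarrow> 'x) \<Rightarrow> bool" where
  "no_fd_invariant scale T \<longleftrightarrow>
     \<not> (\<exists>L. module.subspace scale L \<and> L \<noteq> {0} \<and> T ` L \<subseteq> L \<and>
            (\<exists>B. finite B \<and> module.span scale B = L))"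

definition similar_to_MA_restr ::
  "('k::field \<Rightarrow> 'x::ab_group_add \<Rightarrow> 'x) \<Rightarrow> ('x \<Rightarrow> 'x) \<Rightarrow> 'a set \<Rightarrow> bool" where
  "similar_to_MA_restr scale T A \<longleftrightarrow>
     (\<exists>(Y :: ('a \<Rightarrow> 'k ratfun) set) J.
        Y \<subseteq> dsum A \<and> module.subspace sumscale Y \<and> MA ` Y \<subseteq> Y \<and>
        Vector_Spaces.linear scale sumscale J \<and> bij_betw J UNIV Y \<and>
        (\<forall>x. J (T x) = MA (J x)))"

end

theory Submission
  imports Defs
begin

text \<open>
  Make \<open>X\<close> a \<open>k[t]\<close>-module by letting \<open>t\<close> act as \<open>T\<close>. A vector in a non-trivial
  finite dimensional invariant subspace is killed by a nonzero polynomial (its orbit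
  \<open>x, Tx, T\<^sup>2x, \<dots>\<close> is linearly dependent), and conversely a vector killed by \<open>p \<noteq> 0\<close> spans,
  together with \<open>Tx, \<dots>, T\<^bsup>deg p - 1\<^esup>x\<close>, a finite dimensional invariant subspace. So the
  condition on \<open>T\<close> says exactly that \<open>X\<close> is a torsion-free \<open>k[t]\<close>-module.

  An intertwiner with \<open>M\<^bsup>(A)\<^esup>\<close> turns \<open>p(T)\<close> into multiplication by \<open>p\<close>, which is injective
  on \<open>\<R>\<^bsup>(A)\<^esup>\<close>; hence restrictions of \<open>M\<^bsup>(A)\<^esup>\<close> are torsion-free. Conversely, if \<open>X\<close> is
  torsion-free, take by Zorn's lemma a maximal \<open>k[t]\<close>-independent set \<open>A \<subseteq> X\<close>. Maximality gives
  every \<open>x\<close> a relation \<open>p(T)x = \<Sum>\<^sub>a q\<^sub>a(T)a\<close> with \<open>p \<noteq> 0\<close>, independence makes the quotients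
  \<open>q\<^sub>a/p \<in> \<R>\<close> independent of the relation, and torsion-freeness makes
  \<open>x \<mapsto> (q\<^sub>a/p)\<^sub>a\<close> injective: this is the required embedding into \<open>\<R>\<^bsup>(A)\<^esup>\<close>.
\<close>

lemma finite_character_maximal:
  assumes finite_character: "\<And>S. P S \<longleftrightarrow> (\<forall>F. finite F \<longrightarrow> F \<subseteq> S \<longrightarrow> P F)"
    and "P {}"
  obtains M where "P M" "\<And>X. P X \<Longrightarrow> M \<subseteq> X \<Longrightarrow> X = M"
proof -
  have "\<Union>C \<in> Collect P" if C: "C \<in> chains (Collect P)" for C
  proof -
    have "P F" if F: "finite F" "F \<subseteq> \<Union>C" for F
    proof (cases "F = {}")
      case False
      then have "C \<noteq> {}" using F by auto
      with F C obtain B where "B \<in> C" "F \<subseteq> B"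
        using finite_subset_Union_chain[of F C "Collect P"] by (auto simp: chains_alt_def)
      then have "P B" using C by (auto dest: chainsD2)
      then show ?thesis using finite_character[of B] \<open>F \<subseteq> B\<close> F(1) by blast
    qed (simp add: \<open>P {}\<close>)
    then show ?thesis using finite_character[of "\<Union>C"] by simp
  qed
  then show ?thesis using Zorn_Lemma[of "Collect P"] that by blast
qed

context vector_space
begin

lemma vanishing_combination_if_card_gt_span:
  assumes "finite B" "finite I" "g ` I \<subseteq> span B" "card B < card I"
  obtains c where "\<exists>i\<in>I. c i \<noteq> 0" "(\<Sum>i\<in>I. scale (c i) (g i)) = 0"
proof (cases "inj_on g I")
  case True
  have "dependent (g ` I)"
  proof (rule ccontr)
    assume "\<not> dependent (g ` I)"
    then have "card (g ` I) \<le> card B"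
      using independent_span_bound[OF \<open>finite B\<close> _ \<open>g ` I \<subseteq> span B\<close>] by simp
    with True \<open>card B < card I\<close> show False by (simp add: card_image)
  qed
  then obtain u where "\<exists>v\<in>g ` I. u v \<noteq> 0" "(\<Sum>v\<in>g ` I. scale (u v) v) = 0"
    using dependent_finite[of "g ` I"] \<open>finite I\<close> by blast
  with True show ?thesis using that[of "u \<circ> g"] by (simp add: sum.reindex)
next
  case False
  then obtain i j where ij: "i \<in> I" "j \<in> I" "i \<noteq> j" "g i = g j"
    unfolding inj_on_def by blast
  let ?c = "\<lambda>k. if k = i then 1 else if k = j then - 1 else 0"
  have "(\<Sum>k\<in>I. scale (?c k) (g k)) = (\<Sum>k\<in>I. (if k = i then g i else 0) - (if k = j then g j else 0))"
    by (rule sum.cong) (use ij in auto)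
  also have "\<dots> = 0" using ij \<open>finite I\<close> by (simp add: sum_subtractf)
  finally show ?thesis
    using ij by (intro that[of ?c]) auto
qed

end

lemma vector_space_sumscale: "vector_space (sumscale :: 'k::field \<Rightarrow> ('a \<Rightarrow> 'k ratfun) \<Rightarrow> _)"
proof
  fix a b :: 'k and f g :: "'a \<Rightarrow> 'k ratfun"
  have const_add:
    "Fraction_Field.Fract [:a + b:] 1 = Fraction_Field.Fract [:a:] 1 + Fraction_Field.Fract [:b:] 1"
    by simp
  have const_mult:
    "Fraction_Field.Fract [:a:] 1 * Fraction_Field.Fract [:b:] 1 = Fraction_Field.Fract [:a * b:] 1"
    by (simp add: mult.commute)
  have const_one: "Fraction_Field.Fract [:1::'k:] 1 = 1"
    by (simp add: One_fract_def one_pCons)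
  show "sumscale a (f + g) = sumscale a f + sumscale a g"
    by (simp add: sumscale_def rscale_def fun_eq_iff distrib_left)
  show "sumscale (a + b) f = sumscale a f + sumscale b f"
    unfolding sumscale_def rscale_def plus_fun_def by (simp only: const_add distrib_right)
  show "sumscale a (sumscale b f) = sumscale (a * b) f"
    unfolding sumscale_def rscale_def by (simp only: mult.assoc[symmetric] const_mult)
  show "sumscale 1 f = f"
    by (simp add: sumscale_def rscale_def fun_eq_iff const_one)
qed

locale linear_operator = vector_space scale
  for scale :: "'k::field \<Rightarrow> 'x::ab_group_add \<Rightarrow> 'x" +
  fixes T :: "'x \<Rightarrow> 'x"
  assumes linear_T: "Vector_Spaces.linear scale scale T"
begin

sublocale T: Vector_Spaces.linear scale scale T
  by (rule linear_T)

lemma funpow_add: "(T ^^ n) (x + y) = (T ^^ n) x + (T ^^ n) y"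
  by (induction n) (simp_all add: T.add)

lemma funpow_scale: "(T ^^ n) (scale c x) = scale c ((T ^^ n) x)"
  by (induction n) (simp_all add: T.scale)

lemma funpow_zero: "(T ^^ n) 0 = 0"
  by (induction n) (simp_all add: T.zero)

lemma funpow_in_invariant: "T ` L \<subseteq> L \<Longrightarrow> x \<in> L \<Longrightarrow> (T ^^ n) x \<in> L"
  by (induction n) auto

definition poly_apply :: "'k poly \<Rightarrow> 'x \<Rightarrow> 'x" where
  "poly_apply p x = (\<Sum>i\<le>degree p. scale (coeff p i) ((T ^^ i) x))"

lemma poly_apply_eq_sum:
  "degree p \<le> n \<Longrightarrow> poly_apply p x = (\<Sum>i\<le>n. scale (coeff p i) ((T ^^ i) x))"
  unfolding poly_apply_def by (rule sum.mono_neutral_left) (auto simp: coeff_eq_0)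

lemma poly_apply_0 [simp]: "poly_apply 0 x = 0"
  by (simp add: poly_apply_def)

lemma poly_apply_add: "poly_apply (p + q) x = poly_apply p x + poly_apply q x"
proof -
  let ?n = "max (degree p) (degree q)"
  have "degree (p + q) \<le> ?n" by (rule degree_add_le) simp_all
  then show ?thesis
    by (simp add: poly_apply_eq_sum[of _ ?n] scale_left_distrib sum.distrib)
qed

lemma poly_apply_smult: "poly_apply (smult c p) x = scale c (poly_apply p x)"
  using degree_smult_le[of c p]
  by (simp add: poly_apply_eq_sum[of _ "degree p"] poly_apply_def scale_sum_right)

lemma poly_apply_minus: "poly_apply (- p) x = - poly_apply p x"
  using poly_apply_add[of p "- p" x] by (simp add: eq_neg_iff_add_eq_0 add.commute)

lemma poly_apply_diff: "poly_apply (p - q) x = poly_apply p x - poly_apply q x"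
  using poly_apply_add[of p "- q" x] by (simp add: poly_apply_minus)

lemma poly_apply_sum: "poly_apply (\<Sum>a\<in>F. f a) x = (\<Sum>a\<in>F. poly_apply (f a) x)"
  by (induction F rule: infinite_finite_induct) (simp_all add: poly_apply_add)

lemma poly_apply_pCons: "poly_apply (pCons a p) x = scale a x + T (poly_apply p x)"
proof -
  have "poly_apply (pCons a p) x = (\<Sum>i\<le>Suc (degree p). scale (coeff (pCons a p) i) ((T ^^ i) x))"
    using degree_pCons_le[of a p] by (rule poly_apply_eq_sum)
  also have "\<dots> = scale a x + (\<Sum>i\<le>degree p. scale (coeff p i) ((T ^^ Suc i) x))"
    by (subst sum.atMost_Suc_shift) simp
  also have "\<dots> = scale a x + T (poly_apply p x)"
    by (simp add: poly_apply_def T.sum T.scale)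
  finally show ?thesis .
qed

lemma poly_apply_monom: "poly_apply (monom c n) x = scale c ((T ^^ n) x)"
  by (induction n) (simp_all add: monom_0 monom_Suc poly_apply_pCons T.scale)

lemma poly_apply_mult: "poly_apply (p * q) x = poly_apply p (poly_apply q x)"
  by (induction p) (simp_all add: poly_apply_add poly_apply_smult poly_apply_pCons)

lemma poly_apply_add_right: "poly_apply p (x + y) = poly_apply p x + poly_apply p y"
  by (simp add: poly_apply_def funpow_add scale_right_distrib sum.distrib)

lemma poly_apply_scale_right: "poly_apply p (scale c x) = scale c (poly_apply p x)"
  by (simp add: poly_apply_def funpow_scale scale_sum_right mult.commute)

lemma poly_apply_zero_right [simp]: "poly_apply p 0 = 0"
  by (simp add: poly_apply_def funpow_zero)

lemma poly_apply_sum_right: "poly_apply p (\<Sum>a\<in>F. f a) = (\<Sum>a\<in>F. poly_apply p (f a))"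
  by (induction F rule: infinite_finite_induct) (simp_all add: poly_apply_add_right)

lemma poly_apply_T: "poly_apply p (T x) = T (poly_apply p x)"
  by (simp add: poly_apply_def T.sum T.scale funpow_swap1)

definition torsion_free :: bool where
  "torsion_free \<longleftrightarrow> (\<forall>p x. p \<noteq> 0 \<longrightarrow> poly_apply p x = 0 \<longrightarrow> x = 0)"

lemma annihilating_poly_if_finite_dim_invariant:
  assumes "finite B" "T ` span B \<subseteq> span B" "v \<in> span B"
  obtains p where "p \<noteq> 0" "poly_apply p v = 0"
proof -
  let ?n = "card B"
  have orbit: "(\<lambda>i. (T ^^ i) v) ` {..?n} \<subseteq> span B"
    using funpow_in_invariant[OF assms(2,3)] by blast
  obtain c where c: "\<exists>i\<le>?n. c i \<noteq> 0" "(\<Sum>i\<le>?n. scale (c i) ((T ^^ i) v)) = 0"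
    by (rule vanishing_combination_if_card_gt_span[OF \<open>finite B\<close> finite_atMost orbit]) auto
  define p where "p = (\<Sum>i\<le>?n. monom (c i) i)"
  have "coeff p i = c i" if "i \<le> ?n" for i
    using that by (simp add: p_def coeff_sum coeff_monom)
  with c(1) have "p \<noteq> 0" by auto
  moreover have "poly_apply p v = 0"
    using c(2) by (simp add: p_def poly_apply_sum poly_apply_monom)
  ultimately show ?thesis by (rule that)
qed

lemma no_fd_invariant_if_torsion_free:
  assumes "torsion_free"
  shows "no_fd_invariant scale T"
  unfolding no_fd_invariant_def
proof
  assume "\<exists>L. subspace L \<and> L \<noteq> {0} \<and> T ` L \<subseteq> L \<and> (\<exists>B. finite B \<and> span B = L)"
  then obtain B v where B: "finite B" "T ` span B \<subseteq> span B" and v: "v \<in> span B" "v \<noteq> 0"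
    using span_zero by blast
  obtain p where "p \<noteq> 0" "poly_apply p v = 0"
    using annihilating_poly_if_finite_dim_invariant[OF B v(1)] .
  with assms v(2) show False by (auto simp: torsion_free_def)
qed

lemma funpow_degree_in_orbit_span:
  assumes "p \<noteq> 0" "poly_apply p x = 0"
  shows "(T ^^ degree p) x \<in> span ((\<lambda>i. (T ^^ i) x) ` {..<degree p})"
proof -
  let ?n = "degree p" and ?S = "span ((\<lambda>i. (T ^^ i) x) ` {..<degree p})"
  have "0 = (\<Sum>i<?n. scale (coeff p i) ((T ^^ i) x)) + scale (lead_coeff p) ((T ^^ ?n) x)"
    using assms(2) by (simp add: poly_apply_def lessThan_Suc_atMost[symmetric])
  then have "scale (lead_coeff p) ((T ^^ ?n) x) = - (\<Sum>i<?n. scale (coeff p i) ((T ^^ i) x))"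
    by (simp add: eq_neg_iff_add_eq_0 add.commute)
  also have "\<dots> \<in> ?S"
    by (intro span_neg span_sum span_scale span_base) auto
  finally have "scale (inverse (lead_coeff p)) (scale (lead_coeff p) ((T ^^ ?n) x)) \<in> ?S"
    by (rule span_scale)
  then show ?thesis using assms(1) by simp
qed

lemma orbit_span_invariant:
  assumes "(T ^^ n) x \<in> span ((\<lambda>i. (T ^^ i) x) ` {..<n})"
  shows "T ` span ((\<lambda>i. (T ^^ i) x) ` {..<n}) \<subseteq> span ((\<lambda>i. (T ^^ i) x) ` {..<n})"
proof -
  have "T ((T ^^ i) x) \<in> span ((\<lambda>i. (T ^^ i) x) ` {..<n})" if "i < n" for i
  proof (cases "Suc i < n")
    case True
    then have "(T ^^ Suc i) x \<in> span ((\<lambda>i. (T ^^ i) x) ` {..<n})"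
      by (blast intro: span_base)
    then show ?thesis by simp
  next
    case False
    with that have "n = Suc i" by simp
    with assms show ?thesis by simp
  qed
  then have "span (T ` (\<lambda>i. (T ^^ i) x) ` {..<n}) \<subseteq> span ((\<lambda>i. (T ^^ i) x) ` {..<n})"
    by (intro span_minimal subspace_span) auto
  then show ?thesis by (simp add: T.span_image)
qed

lemma torsion_free_if_no_fd_invariant:
  assumes "no_fd_invariant scale T"
  shows "torsion_free"
  unfolding torsion_free_def
proof (intro allI impI)
  fix p x
  assume p: "p \<noteq> 0" "poly_apply p x = 0"
  let ?L = "span ((\<lambda>i. (T ^^ i) x) ` {..<degree p})"
  have top: "(T ^^ degree p) x \<in> ?L"
    using funpow_degree_in_orbit_span[OF p] .
  have "x \<in> ?L"
  proof (cases "degree p")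
    case 0
    with top show ?thesis by simp
  next
    case (Suc n)
    then show ?thesis by (auto intro!: span_base image_eqI[of x _ 0])
  qed
  moreover have "?L = {0}"
    using assms orbit_span_invariant[OF top] subspace_span finite_imageI[OF finite_lessThan]
    unfolding no_fd_invariant_def by blast
  ultimately show "x = 0" by simp
qed

lemma no_fd_invariant_iff_torsion_free: "no_fd_invariant scale T \<longleftrightarrow> torsion_free"
  using no_fd_invariant_if_torsion_free torsion_free_if_no_fd_invariant by blast

lemma poly_apply_intertwined:
  assumes "Vector_Spaces.linear scale sumscale J" and JT: "\<And>x. J (T x) = MA (J x)"
  shows "J (poly_apply p x) = (\<lambda>\<alpha>. Fraction_Field.Fract p 1 * J x \<alpha>)"
proof -
  interpret J: Vector_Spaces.linear scale sumscale J by fact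
  show ?thesis
  proof (induction p)
    case 0
    show ?case by (simp add: J.zero Zero_fract_def[symmetric] zero_fun_def)
  next
    case (pCons a p)
    have pCons_fract: "Fraction_Field.Fract (pCons a p) 1
        = Fraction_Field.Fract [:a:] 1 + Fraction_Field.Fract [:0, 1:] 1 * Fraction_Field.Fract p 1"
      by (simp flip: add_pCons) (simp add: pCons_eq_iff)
    have "J (poly_apply (pCons a p) x) = sumscale a (J x) + MA (J (poly_apply p x))"
      by (simp add: poly_apply_pCons J.add J.scale JT)
    also have "\<dots> = (\<lambda>\<alpha>. Fraction_Field.Fract (pCons a p) 1 * J x \<alpha>)"
      unfolding pCons.IH sumscale_def rscale_def MA_def Mop_def plus_fun_def pCons_fract
      by (simp only: distrib_right mult.assoc)
    finally show ?case .
  qed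
qed

lemma torsion_free_if_similar:
  fixes A :: "'a set"
  assumes "similar_to_MA_restr scale T A"
  shows "torsion_free"
  unfolding torsion_free_def
proof (intro allI impI)
  fix p x
  assume p: "p \<noteq> 0" "poly_apply p x = 0"
  obtain J :: "'x \<Rightarrow> 'a \<Rightarrow> 'k ratfun"
    where lin: "Vector_Spaces.linear scale sumscale J" and "inj J"
      and JT: "\<And>x. J (T x) = MA (J x)"
    using assms unfolding similar_to_MA_restr_def by (blast dest: bij_betw_imp_inj_on)
  interpret J: Vector_Spaces.linear scale sumscale J by (rule lin)
  have "Fraction_Field.Fract p 1 \<noteq> 0"
    using p(1) by (simp add: Zero_fract_def eq_fract)
  moreover have "Fraction_Field.Fract p 1 * J x \<alpha> = 0" for \<alpha>
    using poly_apply_intertwined[OF lin JT, of p x] p(2) J.zero by (metis zero_fun_def)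
  ultimately have "J x = 0" by (simp add: fun_eq_iff)
  with \<open>inj J\<close> show "x = 0" by (simp add: J.inj_iff_eq_0)
qed

definition poly_independent :: "'x set \<Rightarrow> bool" where
  "poly_independent S \<longleftrightarrow>
     (\<forall>F q. finite F \<longrightarrow> F \<subseteq> S \<longrightarrow> (\<Sum>a\<in>F. poly_apply (q a) a) = 0 \<longrightarrow> (\<forall>a\<in>F. q a = 0))"

lemma poly_independentD:
  assumes "poly_independent S" "finite F" "F \<subseteq> S" "(\<Sum>a\<in>F. poly_apply (q a) a) = 0" "a \<in> F"
  shows "q a = 0"
  using assms unfolding poly_independent_def by blast

lemma ex_maximal_poly_independent:
  obtains A where "poly_independent A" "\<And>X. poly_independent X \<Longrightarrow> A \<subseteq> X \<Longrightarrow> X = A"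
proof (rule finite_character_maximal)
  show "poly_independent S \<longleftrightarrow> (\<forall>F. finite F \<longrightarrow> F \<subseteq> S \<longrightarrow> poly_independent F)" for S
    unfolding poly_independent_def by (meson order_trans order_refl)
qed (auto simp: poly_independent_def)

end

locale maximal_poly_independent = linear_operator scale T
  for scale :: "'k::field \<Rightarrow> 'x::ab_group_add \<Rightarrow> 'x" and T +
  fixes A :: "'x set"
  assumes torsion_free: "linear_operator.torsion_free scale T"
    and independent: "linear_operator.poly_independent scale T A"
    and maximal: "\<And>x. x \<notin> A \<Longrightarrow> \<not> linear_operator.poly_independent scale T (insert x A)"
begin

text \<open>\<open>frac_rep x p q\<close> says \<open>x = \<Sum>\<^sub>a (q a / p) a\<close> with coefficients in \<open>k(t)\<close>.\<close>

definition frac_rep :: "'x \<Rightarrow> 'k poly \<Rightarrow> ('x \<Rightarrow> 'k poly) \<Rightarrow> bool" where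
  "frac_rep x p q \<longleftrightarrow> p \<noteq> 0 \<and> finite {a. q a \<noteq> 0} \<and> {a. q a \<noteq> 0} \<subseteq> A \<and>
     poly_apply p x = (\<Sum>a | q a \<noteq> 0. poly_apply (q a) a)"

lemma frac_repI:
  assumes "p \<noteq> 0" "finite F" "F \<subseteq> A" "\<And>a. a \<notin> F \<Longrightarrow> q a = 0"
    and "poly_apply p x = (\<Sum>a\<in>F. poly_apply (q a) a)"
  shows "frac_rep x p q"
proof -
  have supp: "{a. q a \<noteq> 0} \<subseteq> F" using assms(4) by blast
  have "(\<Sum>a | q a \<noteq> 0. poly_apply (q a) a) = (\<Sum>a\<in>F. poly_apply (q a) a)"
    by (rule sum.mono_neutral_left) (use assms(2) supp in auto)
  with assms supp show ?thesis
    unfolding frac_rep_def by (auto intro: finite_subset)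
qed

lemma frac_rep_sum:
  assumes "frac_rep x p q" "finite F" "{a. q a \<noteq> 0} \<subseteq> F"
  shows "poly_apply p x = (\<Sum>a\<in>F. poly_apply (q a) a)"
proof -
  have "(\<Sum>a | q a \<noteq> 0. poly_apply (q a) a) = (\<Sum>a\<in>F. poly_apply (q a) a)"
    by (rule sum.mono_neutral_left) (use assms(2,3) in auto)
  with assms(1) show ?thesis unfolding frac_rep_def by simp
qed

lemma frac_rep_exists: "\<exists>p q. frac_rep x p q"
proof (cases "x \<in> A")
  case True
  have "frac_rep x 1 (\<lambda>a. if a = x then 1 else 0)"
    by (rule frac_repI[of _ "{x}"]) (use True in auto)
  then show ?thesis by blast
next
  case False
  then obtain F q where F: "finite F" "F \<subseteq> insert x A" "(\<Sum>a\<in>F. poly_apply (q a) a) = 0"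
    and nontrivial: "\<exists>a\<in>F. q a \<noteq> 0"
    using maximal[OF False] unfolding poly_independent_def by blast
  have x: "x \<in> F \<and> q x \<noteq> 0"
  proof (rule ccontr)
    assume "\<not> (x \<in> F \<and> q x \<noteq> 0)"
    then have "(\<Sum>a\<in>F - {x}. poly_apply (q a) a) = 0"
      using F(1,3) by (auto simp: sum_diff1)
    moreover have "F - {x} \<subseteq> A" using F(2) by blast
    ultimately have "\<forall>a\<in>F - {x}. q a = 0"
      using poly_independentD[OF independent] F(1) by blast
    with nontrivial \<open>\<not> (x \<in> F \<and> q x \<noteq> 0)\<close> show False by blast
  qed
  have "poly_apply (q x) x = - (\<Sum>a\<in>F - {x}. poly_apply (q a) a)"
    using F(1,3) x by (simp add: sum_diff1 eq_neg_iff_add_eq_0)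
  also have "\<dots> = (\<Sum>a\<in>F - {x}. poly_apply (if a \<in> F - {x} then - q a else 0) a)"
    by (simp add: poly_apply_minus flip: sum_negf)
  finally have "frac_rep x (q x) (\<lambda>a. if a \<in> F - {x} then - q a else 0)"
    by (intro frac_repI[where F = "F - {x}"]) (use x F in auto)
  then show ?thesis by blast
qed

lemma frac_rep_unique:
  assumes r: "frac_rep x p q" and r': "frac_rep x p' q'"
  shows "p' * q a = p * q' a"
proof -
  define G where "G = {a. q a \<noteq> 0} \<union> {a. q' a \<noteq> 0}"
  have G: "finite G" "G \<subseteq> A" using r r' by (auto simp: G_def frac_rep_def)
  have "poly_apply (p' * p) x = (\<Sum>a\<in>G. poly_apply (p' * q a) a)"
    using frac_rep_sum[OF r G(1)] by (simp add: G_def poly_apply_mult poly_apply_sum_right)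
  moreover have "poly_apply (p * p') x = (\<Sum>a\<in>G. poly_apply (p * q' a) a)"
    using frac_rep_sum[OF r' G(1)] by (simp add: G_def poly_apply_mult poly_apply_sum_right)
  ultimately have "(\<Sum>a\<in>G. poly_apply (p' * q a - p * q' a) a) = 0"
    by (simp add: poly_apply_diff sum_subtractf mult.commute)
  then have "p' * q a - p * q' a = 0" if "a \<in> G"
    using poly_independentD[OF independent G, where q = "\<lambda>a. p' * q a - p * q' a"] that by simp
  then show ?thesis by (cases "a \<in> G") (auto simp: G_def)
qed

definition coords :: "'x \<Rightarrow> 'x \<Rightarrow> 'k ratfun" where
  "coords x = (SOME f. \<exists>p q. frac_rep x p q \<and> f = (\<lambda>a. Fraction_Field.Fract (q a) p))"

lemma coords_eq:
  assumes r: "frac_rep x p q"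
  shows "coords x = (\<lambda>a. Fraction_Field.Fract (q a) p)"
proof -
  have "\<exists>f p q. frac_rep x p q \<and> f = (\<lambda>a. Fraction_Field.Fract (q a) p)"
    using frac_rep_exists by blast
  from someI_ex[OF this] obtain p' q' where r': "frac_rep x p' q'"
    and coords: "coords x = (\<lambda>a. Fraction_Field.Fract (q' a) p')"
    unfolding coords_def by blast
  have "p \<noteq> 0" "p' \<noteq> 0" using r r' by (auto simp: frac_rep_def)
  then have "Fraction_Field.Fract (q' a) p' = Fraction_Field.Fract (q a) p" for a
    using frac_rep_unique[OF r r', of a] by (simp add: eq_fract mult.commute)
  with coords show ?thesis by simp
qed

lemma frac_rep_add:
  assumes r: "frac_rep x p q" and r': "frac_rep y p' q'"
  shows "frac_rep (x + y) (p * p') (\<lambda>a. p' * q a + p * q' a)"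
proof -
  define G where "G = {a. q a \<noteq> 0} \<union> {a. q' a \<noteq> 0}"
  have G: "finite G" "G \<subseteq> A" using r r' by (auto simp: G_def frac_rep_def)
  have "poly_apply (p * p') (x + y) = poly_apply p' (poly_apply p x) + poly_apply p (poly_apply p' y)"
    by (metis poly_apply_add_right poly_apply_mult mult.commute)
  also have "\<dots> = (\<Sum>a\<in>G. poly_apply (p' * q a + p * q' a) a)"
    using frac_rep_sum[OF r G(1)] frac_rep_sum[OF r' G(1)]
    by (simp add: G_def poly_apply_sum_right poly_apply_add poly_apply_mult sum.distrib)
  finally show ?thesis
    using r r' G by (intro frac_repI) (auto simp: frac_rep_def G_def)
qed

lemma frac_rep_scale:
  assumes r: "frac_rep x p q"
  shows "frac_rep (scale c x) p (\<lambda>a. smult c (q a))"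
proof -
  let ?F = "{a. q a \<noteq> 0}"
  have F: "p \<noteq> 0" "finite ?F" "?F \<subseteq> A" using r by (auto simp: frac_rep_def)
  have "poly_apply p (scale c x) = (\<Sum>a\<in>?F. poly_apply (smult c (q a)) a)"
    using frac_rep_sum[OF r F(2) order_refl]
    by (simp add: poly_apply_scale_right poly_apply_smult scale_sum_right)
  with F show ?thesis by (intro frac_repI) auto
qed

lemma frac_rep_T:
  assumes r: "frac_rep x p q"
  shows "frac_rep (T x) p (\<lambda>a. pCons 0 (q a))"
proof -
  let ?F = "{a. q a \<noteq> 0}"
  have F: "p \<noteq> 0" "finite ?F" "?F \<subseteq> A" using r by (auto simp: frac_rep_def)
  have "poly_apply p (T x) = (\<Sum>a\<in>?F. poly_apply (pCons 0 (q a)) a)"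
    using frac_rep_sum[OF r F(2) order_refl] by (simp add: poly_apply_T T.sum poly_apply_pCons)
  with F show ?thesis by (intro frac_repI) auto
qed

lemma coords_add: "coords (x + y) = coords x + coords y"
proof -
  obtain p q p' q' where r: "frac_rep x p q" and r': "frac_rep y p' q'"
    using frac_rep_exists by blast
  have "p \<noteq> 0" "p' \<noteq> 0" using r r' by (auto simp: frac_rep_def)
  then show ?thesis
    using coords_eq[OF frac_rep_add[OF r r']] coords_eq[OF r] coords_eq[OF r']
    by (simp add: fun_eq_iff mult.commute)
qed

lemma coords_scale: "coords (scale c x) = sumscale c (coords x)"
proof -
  obtain p q where r: "frac_rep x p q" using frac_rep_exists by blast
  show ?thesis using coords_eq[OF frac_rep_scale[OF r]] coords_eq[OF r]
    by (simp add: fun_eq_iff sumscale_def rscale_def)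
qed

lemma coords_T: "coords (T x) = MA (coords x)"
proof -
  obtain p q where r: "frac_rep x p q" using frac_rep_exists by blast
  show ?thesis using coords_eq[OF frac_rep_T[OF r]] coords_eq[OF r]
    by (simp add: fun_eq_iff MA_def Mop_def)
qed

lemma coords_in_dsum: "coords x \<in> dsum A"
proof -
  obtain p q where r: "frac_rep x p q" using frac_rep_exists by blast
  have "{a. coords x a \<noteq> 0} \<subseteq> {a. q a \<noteq> 0}"
    by (auto simp: coords_eq[OF r] Zero_fract_def eq_fract(3))
  with r show ?thesis unfolding dsum_def frac_rep_def by (auto intro: finite_subset)
qed

lemma coords_eq_0D: "coords x = 0 \<Longrightarrow> x = 0"
proof -
  assume coords: "coords x = 0"
  obtain p q where r: "frac_rep x p q" using frac_rep_exists by blast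
  then have "p \<noteq> 0" by (simp add: frac_rep_def)
  have "Fraction_Field.Fract (q a) p = 0" for a
    using coords coords_eq[OF r] by (metis zero_fun_def)
  with \<open>p \<noteq> 0\<close> have "q a = 0" for a by (simp add: Zero_fract_def eq_fract)
  with r have "poly_apply p x = 0" by (simp add: frac_rep_def)
  with \<open>p \<noteq> 0\<close> torsion_free show "x = 0" by (auto simp: torsion_free_def)
qed

lemma similar_to_MA_restr_coords: "similar_to_MA_restr scale T A"
proof -
  interpret coords: Vector_Spaces.linear scale sumscale coords
    by (simp add: Vector_Spaces.linear_iff vector_space_axioms vector_space_sumscale
        coords_add coords_scale)
  have "inj coords"
    using coords_eq_0D by (auto simp: coords.inj_iff_eq_0)
  show ?thesis
    unfolding similar_to_MA_restr_def
  proof (intro exI conjI)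
    show "range coords \<subseteq> dsum A" using coords_in_dsum by blast
    show "module.subspace sumscale (range coords)" by (rule coords.subspace_image) simp
    show "MA ` range coords \<subseteq> range coords" by (auto simp flip: coords_T)
    show "bij_betw coords UNIV (range coords)" using \<open>inj coords\<close> by (simp add: bij_betw_def)
  qed (simp_all add: coords.linear_axioms coords_T)
qed

end

context linear_operator
begin

lemma similar_if_torsion_free:
  assumes "torsion_free"
  shows "\<exists>A :: 'x set. similar_to_MA_restr scale T A"
proof -
  obtain A where "poly_independent A" "\<And>X. poly_independent X \<Longrightarrow> A \<subseteq> X \<Longrightarrow> X = A"
    by (rule ex_maximal_poly_independent) blast
  then interpret maximal_poly_independent scale T A
    using assms by unfold_locales blast+
  show ?thesis using similar_to_MA_restr_coords by blast
qed

end

theorem theorem1p4: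
  fixes scale :: "'k::field \<Rightarrow> 'x::ab_group_add \<Rightarrow> 'x"
    and T :: "'x \<Rightarrow> 'x"
  assumes "vector_space scale"
    and "Vector_Spaces.linear scale scale T"
  shows "(no_fd_invariant scale T \<longleftrightarrow> (\<exists>A :: 'x set. similar_to_MA_restr scale T A))
       \<and> (\<forall>A :: 'a set. similar_to_MA_restr scale T A \<longrightarrow> no_fd_invariant scale T)"
proof -
  interpret linear_operator scale T
    by (intro linear_operator.intro linear_operator_axioms.intro assms)
  show ?thesis
    using no_fd_invariant_iff_torsion_free similar_if_torsion_free
      torsion_free_if_similar[where 'a = 'x] torsion_free_if_similar[where 'a = 'a]
    by blast
qed

end
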